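(* Let $N\ge1$ and $\varphi,\psi\in\mathbb{C}^N$ be such that for $k=0,\ldots,2N-2$, $$\Big|P_\varphi\Big(\tfrac{k}{2N-1}\Big)\Big|=\Big|P_\psi\Big(\tfrac{k}{2N-1}\Big)\Big|$$ and $$\Big|P_\varphi\Big(\tfrac{k+1}{2N-1}\Big)-P_\varphi\Big(\tfrac{k}{2N-1}\Big)\Big|=\Big|P_\psi\Big(\tfrac{k+1}{2N-1}\Big)-P_\psi\Big(\tfrac{k}{2N-1}\Big)\Big|.$$ Then there exists $\lambda\in\mathbb{C}$ with $|\lambda|=1$ such that $\psi=\lambda\varphi$.
   Context: For $\psi=(\psi_0,\ldots,\psi_{N-1})\in\mathbb{C}^N$, $P_\psi(x)=\sum_{j=0}^{N-1}\psi_je^{2i\pi jx}$ for $x\in\mathbb{R}$ (a $1$-periodic function). *)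

theory Defs
  imports Complex_Main
begin

text \<open>Vectors in C^N are represented as functions nat \<Rightarrow> complex, only indices j < N matter.
  P_psi(x) = sum_{j=0}^{N-1} psi_j e^{2 i pi j x}.\<close>
definition trig_poly :: "nat \<Rightarrow> (nat \<Rightarrow> complex) \<Rightarrow> real \<Rightarrow> complex" where
  "trig_poly N \<psi> x = (\<Sum>j<N. \<psi> j * exp (2 * \<i> * complex_of_real pi * of_nat j * complex_of_real x))"

end

theory Submission
  imports Defs "HOL-Computational_Algebra.Polynomial" "HOL-Analysis.Complex_Transcendental"
begin

text \<open>
  Let \<open>P(z) = \<Sum>\<^sub>j \<phi>\<^sub>j z^j\<close>, let \<open>R(z) = z^(N-1) cnj (P (1 / cnj z))\<close> be its reflected conjugate,
  and let \<open>w = exp (2\<pi>i / (2N-1))\<close>. On the unit circle \<open>P(z) R(z) = z^(N-1) |P(z)|^2\<close> and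
  \<open>P(wz) R(z) + w^N P(z) R(wz) = z^(N-1) 2 Re (P(wz) cnj (P(z)))\<close>, which by polarisation is
  determined by \<open>|P(wz)|\<close>, \<open>|P(z)|\<close> and \<open>|P(wz) - P(z)|\<close>. Both polynomials have degree at most
  \<open>2N - 2\<close>, so the hypotheses at the \<open>2N - 1\<close> roots of unity make them coincide for \<open>\<phi>\<close> and \<open>\<psi>\<close>.
  Eliminating between the two identities shows that a product of two polynomials vanishes. If the
  first factor vanishes, \<open>P\<^sub>\<psi>(wz) P\<^sub>\<phi>(z) = P\<^sub>\<psi>(z) P\<^sub>\<phi>(wz)\<close>, and comparing lowest coefficients
  gives \<open>\<psi> = \<lambda>\<phi>\<close>. If the second one vanishes, comparing lowest and highest coefficients modulo
  \<open>2N - 1\<close> shows that \<open>\<phi>\<close> and \<open>\<psi>\<close> are supported at index 0. In both cases \<open>\<psi> = \<lambda>\<phi>\<close>, and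
  \<open>|\<lambda>| = 1\<close> because the middle coefficient of \<open>P R\<close> is the energy \<open>\<Sum>\<^sub>j |\<phi>\<^sub>j|^2\<close>.
\<close>

lemma coeff_less_order_0:
  fixes p :: "'a::idom poly"
  assumes "i < order 0 p"
  shows "coeff p i = 0"
proof -
  obtain q where "p = monom 1 (order 0 p) * q"
    using order_1[of 0 p] by (auto simp: monom_altdef)
  then have "coeff p i = coeff (monom 1 (order 0 p) * q) i"
    by (rule arg_cong)
  with assms show ?thesis
    by (simp add: coeff_monom_mult)
qed

lemma coeff_order_0_neq_0:
  fixes p :: "'a::idom poly"
  assumes "p \<noteq> 0"
  shows "coeff p (order 0 p) \<noteq> 0"
proof -
  obtain q where p: "p = monom 1 (order 0 p) * q" and "\<not> [:0, 1:] dvd q"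
    using order_decomp[OF assms, of 0] by (auto simp: monom_altdef)
  then have "coeff q 0 \<noteq> 0"
    using poly_eq_0_iff_dvd[of q 0] by (simp add: poly_0_coeff_0)
  moreover have "coeff p (order 0 p) = coeff (monom 1 (order 0 p) * q) (order 0 p)"
    using p by (rule arg_cong)
  ultimately show ?thesis
    by (simp add: coeff_monom_mult)
qed

lemma coeff_mult_lowest:
  fixes p q :: "'a::comm_semiring_0 poly"
  assumes "\<forall>i<a. coeff p i = 0" and "\<forall>j<b. coeff q j = 0"
  shows "coeff (p * q) (a + b) = coeff p a * coeff q b"
proof -
  have "coeff p i * coeff q (a + b - i) = 0" if "i \<le> a + b" "i \<noteq> a" for i
    using assms that by (cases "i < a") auto
  then have "coeff (p * q) (a + b) = (\<Sum>i\<in>{a}. coeff p i * coeff q (a + b - i))"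
    unfolding coeff_mult by (intro sum.mono_neutral_right) auto
  then show ?thesis
    by simp
qed

lemma dilation_identity_order_0:
  fixes p r :: "'a::idom poly"
  assumes eq: "r * (p \<circ>\<^sub>p [:0, w:]) = smult c ((r \<circ>\<^sub>p [:0, w:]) * p)"
    and "r \<noteq> 0" and "p \<noteq> 0"
  shows "w ^ order 0 p = c * w ^ order 0 r"
proof -
  define a b where "a = order 0 r" and "b = order 0 p"
  have low: "\<forall>i<a. coeff r i = 0" "\<forall>i<b. coeff p i = 0"
    by (auto simp: a_def b_def coeff_less_order_0)
  have "coeff (r * (p \<circ>\<^sub>p [:0, w:])) (a + b) = coeff r a * (w ^ b * coeff p b)"
    using coeff_mult_lowest[of a r b] low by (simp add: coeff_pcompose_linear)
  moreover have "coeff (smult c ((r \<circ>\<^sub>p [:0, w:]) * p)) (a + b) = c * (w ^ a * coeff r a * coeff p b)"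
    using coeff_mult_lowest[of a _ b p] low by (simp add: coeff_pcompose_linear)
  moreover have "coeff r a * coeff p b \<noteq> 0"
    using assms by (simp add: a_def b_def coeff_order_0_neq_0)
  ultimately show ?thesis
    using eq by (simp add: a_def b_def mult_ac)
qed

lemma dilation_identity_degree:
  fixes p r :: "'a::idom poly"
  assumes eq: "r * (p \<circ>\<^sub>p [:0, w:]) = smult c ((r \<circ>\<^sub>p [:0, w:]) * p)"
    and "r \<noteq> 0" and "p \<noteq> 0" and "w \<noteq> 0"
  shows "w ^ degree p = c * w ^ degree r"
proof -
  have deg: "degree (q \<circ>\<^sub>p [:0, w:]) = degree q" for q :: "'a poly"
    using \<open>w \<noteq> 0\<close> by (simp add: degree_pcompose)
  have "coeff (r * (p \<circ>\<^sub>p [:0, w:])) (degree r + degree p) = lead_coeff r * (w ^ degree p * lead_coeff p)"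
    using coeff_mult_degree_sum[of r "p \<circ>\<^sub>p [:0, w:]"] by (simp add: deg coeff_pcompose_linear)
  moreover have "coeff (smult c ((r \<circ>\<^sub>p [:0, w:]) * p)) (degree r + degree p)
      = c * (w ^ degree r * lead_coeff r * lead_coeff p)"
    using coeff_mult_degree_sum[of "r \<circ>\<^sub>p [:0, w:]" p] by (simp add: deg coeff_pcompose_linear)
  ultimately show ?thesis
    using eq assms by (simp add: mult_ac)
qed

lemma dilation_identity_proportional:
  fixes p q :: "'a::field poly"
  assumes eq: "q * (p \<circ>\<^sub>p [:0, w:]) = (q \<circ>\<^sub>p [:0, w:]) * p" and "q \<noteq> 0"
    and "degree p < n" and "degree q < n" and inj: "inj_on (\<lambda>i. w ^ i) {..<n}"
  shows "\<exists>l. p = smult l q"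
proof -
  define a where "a = order 0 q"
  define g where "g = p - smult (coeff p a / coeff q a) q"
  have "coeff g a = 0"
    using coeff_order_0_neq_0[OF \<open>q \<noteq> 0\<close>] by (simp add: g_def a_def)
  have eq_g: "q * (g \<circ>\<^sub>p [:0, w:]) = smult 1 ((q \<circ>\<^sub>p [:0, w:]) * g)"
    using eq by (simp add: g_def pcompose_diff pcompose_smult algebra_simps)
  have "g = 0"
  proof (rule ccontr)
    assume "g \<noteq> 0"
    have "order 0 g \<le> degree g" "a \<le> degree q"
      using order_degree \<open>g \<noteq> 0\<close> \<open>q \<noteq> 0\<close> by (auto simp: a_def)
    moreover have "degree g < n"
      using assms by (simp add: g_def degree_diff_less)
    moreover have "w ^ order 0 g = w ^ a"
      using dilation_identity_order_0[OF eq_g \<open>q \<noteq> 0\<close> \<open>g \<noteq> 0\<close>] by (simp add: a_def)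
    ultimately have "order 0 g = a"
      using inj \<open>degree q < n\<close> by (auto dest: inj_onD)
    then show False
      using \<open>coeff g a = 0\<close> coeff_order_0_neq_0[OF \<open>g \<noteq> 0\<close>] by simp
  qed
  then show ?thesis
    by (auto simp: g_def)
qed

lemma poly_eq_on_powers:
  fixes p q :: "'a::idom poly"
  assumes "degree p < M" and "degree q < M" and "inj_on (\<lambda>k. w ^ k) {..<M}"
    and "\<forall>k<M. poly p (w ^ k) = poly q (w ^ k)"
  shows "p = q"
  by (rule poly_eqI_degree[where A = "(\<lambda>k. w ^ k) ` {..<M}"]) (use assms in \<open>auto simp: card_image\<close>)

definition poly_of_vec :: "nat \<Rightarrow> (nat \<Rightarrow> 'a::comm_monoid_add) \<Rightarrow> 'a poly" where
  "poly_of_vec N f = (\<Sum>j<N. monom (f j) j)"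

definition rev_cnj_poly :: "nat \<Rightarrow> (nat \<Rightarrow> complex) \<Rightarrow> complex poly" where
  "rev_cnj_poly N f = poly_of_vec N (\<lambda>j. cnj (f (N - 1 - j)))"

lemma coeff_poly_of_vec: "coeff (poly_of_vec N f) i = (if i < N then f i else 0)"
  by (simp add: poly_of_vec_def coeff_sum)

lemma coeff_rev_cnj_poly: "coeff (rev_cnj_poly N f) i = (if i < N then cnj (f (N - 1 - i)) else 0)"
  by (simp add: rev_cnj_poly_def coeff_poly_of_vec)

lemma degree_poly_of_vec_le: "degree (poly_of_vec N f) \<le> N - 1"
  by (rule degree_le) (auto simp: coeff_poly_of_vec)

lemma degree_rev_cnj_poly_le: "degree (rev_cnj_poly N f) \<le> N - 1"
  unfolding rev_cnj_poly_def by (rule degree_poly_of_vec_le)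

lemma poly_poly_of_vec:
  fixes f :: "nat \<Rightarrow> 'a::comm_semiring_1"
  shows "poly (poly_of_vec N f) z = (\<Sum>j<N. f j * z ^ j)"
  by (simp add: poly_of_vec_def poly_sum poly_monom)

lemma poly_of_vec_eq_0_iff: "poly_of_vec N f = 0 \<longleftrightarrow> (\<forall>j<N. f j = 0)"
  by (auto simp: poly_eq_iff coeff_poly_of_vec)

lemma poly_of_vec_eq_smult_iff: "poly_of_vec N g = smult c (poly_of_vec N f) \<longleftrightarrow> (\<forall>j<N. g j = c * f j)"
  by (auto simp: poly_eq_iff coeff_poly_of_vec)

lemma rev_cnj_poly_eq_0_iff: "rev_cnj_poly N f = 0 \<longleftrightarrow> (\<forall>j<N. f j = 0)"
proof -
  have "(\<forall>i<N. f (N - 1 - i) = 0) \<longleftrightarrow> (\<forall>j<N. f j = 0)"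
  proof (intro iffI allI impI)
    fix j assume "\<forall>i<N. f (N - 1 - i) = 0" and "j < N"
    then show "f j = 0"
      by (drule_tac x = "N - 1 - j" in spec) auto
  qed auto
  then show ?thesis
    by (simp add: rev_cnj_poly_def poly_of_vec_eq_0_iff)
qed

lemma poly_rev_cnj_poly_unit:
  assumes "cmod z = 1"
  shows "poly (rev_cnj_poly N f) z = z ^ (N - 1) * cnj (poly (poly_of_vec N f) z)"
proof -
  have unit: "z * cnj z = 1"
    using complex_norm_square[of z] assms by simp
  have pow: "z ^ (N - 1 - j) = z ^ (N - 1) * cnj z ^ j" if "j < N" for j
  proof -
    have "z ^ (N - 1) * cnj z ^ j = z ^ (N - 1 - j) * (z * cnj z) ^ j"
      using that by (simp add: power_mult_distrib flip: power_add)
    then show ?thesis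
      by (simp only: unit power_one mult_1_right)
  qed
  have "(\<Sum>j<N. cnj (f j) * z ^ (N - 1 - j)) = (\<Sum>j<N. cnj (f j) * (z ^ (N - 1) * cnj z ^ j))"
  proof (intro sum.cong refl)
    fix j assume "j \<in> {..<N}"
    then show "cnj (f j) * z ^ (N - 1 - j) = cnj (f j) * (z ^ (N - 1) * cnj z ^ j)"
      by (subst pow) simp_all
  qed
  moreover have "(\<Sum>i<N. cnj (f (N - 1 - i)) * z ^ i)
      = (\<Sum>i<N. (\<lambda>j. cnj (f j) * z ^ (N - 1 - j)) (N - Suc i))"
    by (intro sum.cong) auto
  moreover have "\<dots> = (\<Sum>j<N. cnj (f j) * z ^ (N - 1 - j))"
    by (rule sum.nat_diff_reindex)
  ultimately show ?thesis
    by (simp add: rev_cnj_poly_def poly_poly_of_vec sum_distrib_left mult_ac)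
qed

definition autocorrelation_poly :: "nat \<Rightarrow> (nat \<Rightarrow> complex) \<Rightarrow> complex poly" where
  "autocorrelation_poly N f = poly_of_vec N f * rev_cnj_poly N f"

text \<open>The factor \<open>w ^ N\<close> makes both summands carry the same power \<open>z ^ (N - 1)\<close> on the unit
  circle when \<open>w ^ (2 * N - 1) = 1\<close>.\<close>
definition shifted_correlation_poly :: "nat \<Rightarrow> complex \<Rightarrow> (nat \<Rightarrow> complex) \<Rightarrow> complex poly" where
  "shifted_correlation_poly N w f =
     (poly_of_vec N f \<circ>\<^sub>p [:0, w:]) * rev_cnj_poly N f
     + smult (w ^ N) (poly_of_vec N f * (rev_cnj_poly N f \<circ>\<^sub>p [:0, w:]))"

lemma degree_autocorrelation_poly_le: "degree (autocorrelation_poly N f) \<le> 2 * N - 2"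
  using degree_mult_le[of "poly_of_vec N f" "rev_cnj_poly N f"]
    degree_poly_of_vec_le[of N f] degree_rev_cnj_poly_le[of N f]
  by (simp add: autocorrelation_poly_def)

lemma degree_shifted_correlation_poly_le: "degree (shifted_correlation_poly N w f) \<le> 2 * N - 2"
proof -
  have dil: "degree (p \<circ>\<^sub>p [:0, w:]) \<le> degree p" for p :: "complex poly"
    using degree_pcompose_le[of p "[:0, w:]"] by (cases "w = 0") auto
  have "degree ((poly_of_vec N f \<circ>\<^sub>p [:0, w:]) * rev_cnj_poly N f) \<le> 2 * N - 2"
    using degree_mult_le[of "poly_of_vec N f \<circ>\<^sub>p [:0, w:]" "rev_cnj_poly N f"]
      dil[of "poly_of_vec N f"] degree_poly_of_vec_le[of N f] degree_rev_cnj_poly_le[of N f]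
    by simp
  moreover have "degree (poly_of_vec N f * (rev_cnj_poly N f \<circ>\<^sub>p [:0, w:])) \<le> 2 * N - 2"
    using degree_mult_le[of "poly_of_vec N f" "rev_cnj_poly N f \<circ>\<^sub>p [:0, w:]"]
      dil[of "rev_cnj_poly N f"] degree_poly_of_vec_le[of N f] degree_rev_cnj_poly_le[of N f]
    by simp
  ultimately show ?thesis
    unfolding shifted_correlation_poly_def
    by (metis degree_add_le degree_smult_le order_trans)
qed

lemma poly_autocorrelation_poly_unit:
  assumes "cmod z = 1"
  shows "poly (autocorrelation_poly N f) z = z ^ (N - 1) * of_real (cmod (poly (poly_of_vec N f) z) ^ 2)"
  using assms by (simp add: autocorrelation_poly_def poly_rev_cnj_poly_unit mult.left_commute
      flip: complex_norm_square)

lemma poly_shifted_correlation_poly_unit: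
  fixes f :: "nat \<Rightarrow> complex"
  assumes "cmod z = 1" and "cmod w = 1" and "w ^ (2 * N - 1) = 1"
  defines "u \<equiv> poly (poly_of_vec N f) z" and "v \<equiv> poly (poly_of_vec N f) (w * z)"
  shows "poly (shifted_correlation_poly N w f) z
    = z ^ (N - 1) * of_real (cmod v ^ 2 + cmod u ^ 2 - cmod (v - u) ^ 2)"
proof -
  have "N + (N - 1) = 2 * N - 1"
    by simp
  then have "w ^ N * w ^ (N - 1) = 1"
    using assms(3) by (simp flip: power_add)
  moreover have "cmod (w * z) = 1"
    using assms by (simp add: norm_mult)
  ultimately have "poly (shifted_correlation_poly N w f) z = z ^ (N - 1) * (v * cnj u + u * cnj v)"
    using assms(1) by (simp add: shifted_correlation_poly_def poly_pcompose poly_rev_cnj_poly_unit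
        u_def v_def power_mult_distrib algebra_simps)
  also have "v * cnj u + u * cnj v = of_real (cmod v ^ 2 + cmod u ^ 2 - cmod (v - u) ^ 2)"
    by (simp only: of_real_add of_real_diff complex_norm_square) (simp add: algebra_simps)
  finally show ?thesis .
qed

lemma coeff_autocorrelation_poly_middle:
  "coeff (autocorrelation_poly N f) (N - 1) = of_real (\<Sum>j<N. cmod (f j) ^ 2)"
proof (cases N)
  case (Suc n)
  have "coeff (autocorrelation_poly N f) (N - 1) = (\<Sum>j\<le>n. f j * cnj (f j))"
    by (auto simp: Suc autocorrelation_poly_def coeff_mult coeff_poly_of_vec coeff_rev_cnj_poly
        intro!: sum.cong)
  then show ?thesis
    by (simp add: Suc lessThan_Suc_atMost flip: complex_norm_square)
qed (simp add: autocorrelation_poly_def poly_of_vec_def)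

lemma trig_poly_at_root_of_unity:
  "trig_poly N f (real k / real M) = poly (poly_of_vec N f) (exp (2 * pi * \<i> / M) ^ k)"
proof -
  have "exp (2 * \<i> * pi * j * (real k / real M)) = (exp (2 * pi * \<i> / M) ^ k) ^ j" for j
    by (simp flip: exp_of_nat_mult power_mult add: algebra_simps)
  then show ?thesis
    by (simp add: trig_poly_def poly_poly_of_vec)
qed

text \<open>Here \<open>b, d\<close> stand for \<open>P\<^sub>\<phi>(z), P\<^sub>\<psi>(z)\<close>, \<open>a, e\<close> for \<open>P\<^sub>\<phi>(wz), P\<^sub>\<psi>(wz)\<close>, and
  \<open>rb, rd, ra, re\<close> for the reflected conjugates of \<open>b, d, a, e\<close>.\<close>

lemma factor_of_correlation_identities:
  fixes a b d e ra rb rd re c :: "'a::comm_ring_1"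
  assumes "b * rb = d * rd" and "a * ra = e * re"
    and "a * rb + c * b * ra = e * rd + c * d * re"
  shows "(e * b - d * a) * (rb * e - c * ra * d) = 0"
proof -
  have "(e * b - d * a) * (rb * e - c * ra * d)
      = e * e * (b * rb) - e * d * (a * rb + c * b * ra) + c * d * d * (a * ra)"
    by (simp add: algebra_simps)
  also have "\<dots> = e * e * (d * rd) - e * d * (e * rd + c * d * re) + c * d * d * (e * re)"
    using assms by simp
  also have "\<dots> = 0"
    by (simp add: algebra_simps)
  finally show ?thesis .
qed

lemma correlation_identities_cases:
  fixes \<phi> \<psi> :: "nat \<Rightarrow> complex"
  assumes A: "autocorrelation_poly N \<phi> = autocorrelation_poly N \<psi>"
    and S: "shifted_correlation_poly N w \<phi> = shifted_correlation_poly N w \<psi>"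
  shows "poly_of_vec N \<phi> * (poly_of_vec N \<psi> \<circ>\<^sub>p [:0, w:]) = (poly_of_vec N \<phi> \<circ>\<^sub>p [:0, w:]) * poly_of_vec N \<psi>
    \<or> rev_cnj_poly N \<phi> * (poly_of_vec N \<psi> \<circ>\<^sub>p [:0, w:])
        = smult (w ^ N) ((rev_cnj_poly N \<phi> \<circ>\<^sub>p [:0, w:]) * poly_of_vec N \<psi>)"
proof -
  define b d rb rd where "b = poly_of_vec N \<phi>" and "d = poly_of_vec N \<psi>"
    and "rb = rev_cnj_poly N \<phi>" and "rd = rev_cnj_poly N \<psi>"
  define a e ra re where "a = b \<circ>\<^sub>p [:0, w:]" and "e = d \<circ>\<^sub>p [:0, w:]"
    and "ra = rb \<circ>\<^sub>p [:0, w:]" and "re = rd \<circ>\<^sub>p [:0, w:]"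
  have "b * rb = d * rd"
    using A by (simp add: autocorrelation_poly_def b_def d_def rb_def rd_def)
  moreover from this have "a * ra = e * re"
    unfolding a_def e_def ra_def re_def by (metis pcompose_mult)
  moreover have "a * rb + [:w ^ N:] * b * ra = e * rd + [:w ^ N:] * d * re"
    using S by (simp add: shifted_correlation_poly_def a_def b_def d_def e_def ra_def rb_def rd_def re_def)
  ultimately have "(e * b - d * a) * (rb * e - [:w ^ N:] * ra * d) = 0"
    by (rule factor_of_correlation_identities)
  then show ?thesis
    by (auto simp: a_def b_def d_def e_def ra_def rb_def mult_ac)
qed

lemma twisted_dilation_identity_constant:
  fixes \<phi> \<psi> :: "nat \<Rightarrow> complex"
  assumes eq: "rev_cnj_poly N \<phi> * (poly_of_vec N \<psi> \<circ>\<^sub>p [:0, w:])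
      = smult (w ^ N) ((rev_cnj_poly N \<phi> \<circ>\<^sub>p [:0, w:]) * poly_of_vec N \<psi>)"
    and w: "\<And>i j. w ^ i = w ^ j \<longleftrightarrow> i mod (2 * N - 1) = j mod (2 * N - 1)"
    and "w \<noteq> 0" and R0: "rev_cnj_poly N \<phi> \<noteq> 0" and P0: "poly_of_vec N \<psi> \<noteq> 0"
    and "0 < j" and "j < N"
  shows "\<phi> j = 0 \<and> \<psi> j = 0"
proof -
  define R P where "R = rev_cnj_poly N \<phi>" and "P = poly_of_vec N \<psi>"
  have R: "order 0 R \<le> degree R" "degree R \<le> N - 1"
    using order_degree R0 degree_rev_cnj_poly_le by (auto simp: R_def)
  have P: "order 0 P \<le> degree P" "degree P \<le> N - 1"
    using order_degree P0 degree_poly_of_vec_le by (auto simp: P_def)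
  have "w ^ order 0 P = w ^ (N + order 0 R)"
    using dilation_identity_order_0[OF eq R0 P0] by (simp add: R_def P_def power_add)
  then have "order 0 P mod (2 * N - 1) = (N + order 0 R) mod (2 * N - 1)"
    using w by blast
  \<comment> \<open>\<open>N + order 0 R\<close> lies in \<open>[N, 2N - 1]\<close> while \<open>order 0 P < N\<close>\<close>
  then have "N + order 0 R = 2 * N - 1"
    using R P \<open>j < N\<close> by (cases "N + order 0 R < 2 * N - 1") auto
  then have ord_R: "order 0 R = N - 1" and deg_R: "degree R = N - 1"
    using R by auto
  have "w ^ degree P = w ^ (2 * N - 1)"
    using dilation_identity_degree[OF eq R0 P0 \<open>w \<noteq> 0\<close>] deg_R \<open>j < N\<close>
    by (simp add: R_def P_def mult_2 flip: power_add)
  then have "degree P = 0"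
    using w[of "degree P" "2 * N - 1"] P \<open>j < N\<close> by simp
  then have "coeff P j = 0"
    using \<open>0 < j\<close> by (simp add: coeff_eq_0)
  moreover have "coeff R (N - 1 - j) = 0"
    using ord_R \<open>0 < j\<close> \<open>j < N\<close> by (intro coeff_less_order_0) simp
  ultimately show ?thesis
    using \<open>j < N\<close> by (simp add: R_def P_def coeff_poly_of_vec coeff_rev_cnj_poly)
qed

lemma unimodular_if_same_energy:
  fixes \<phi> \<psi> :: "nat \<Rightarrow> complex"
  assumes "autocorrelation_poly N \<phi> = autocorrelation_poly N \<psi>"
    and "\<forall>j<N. \<psi> j = l * \<phi> j" and "\<exists>j<N. \<phi> j \<noteq> 0"
  shows "cmod l = 1"
proof -
  have "complex_of_real (\<Sum>j<N. cmod (\<phi> j) ^ 2) = of_real (\<Sum>j<N. cmod (\<psi> j) ^ 2)"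
    using assms(1) by (metis coeff_autocorrelation_poly_middle)
  then have "(\<Sum>j<N. cmod (\<phi> j) ^ 2) = (\<Sum>j<N. cmod (\<psi> j) ^ 2)"
    by (simp only: of_real_eq_iff)
  also have "\<dots> = cmod l ^ 2 * (\<Sum>j<N. cmod (\<phi> j) ^ 2)"
    using assms(2) by (simp add: norm_mult power_mult_distrib sum_distrib_left)
  finally have "(\<Sum>j<N. cmod (\<phi> j) ^ 2) = cmod l ^ 2 * (\<Sum>j<N. cmod (\<phi> j) ^ 2)" .
  moreover have "(\<Sum>j<N. cmod (\<phi> j) ^ 2) > 0"
    using assms(3) by (auto intro: sum_pos2)
  ultimately have "cmod l ^ 2 = 1"
    by simp
  then show ?thesis
    using norm_ge_zero[of l] by (auto simp: power2_eq_1_iff)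
qed

lemma phase_retrieval_from_correlations:
  fixes \<phi> \<psi> :: "nat \<Rightarrow> complex"
  assumes A: "autocorrelation_poly N \<phi> = autocorrelation_poly N \<psi>"
    and S: "shifted_correlation_poly N w \<phi> = shifted_correlation_poly N w \<psi>"
    and w: "\<And>i j. w ^ i = w ^ j \<longleftrightarrow> i mod (2 * N - 1) = j mod (2 * N - 1)" and "w \<noteq> 0"
  shows "\<exists>c. cmod c = 1 \<and> (\<forall>j<N. \<psi> j = c * \<phi> j)"
proof (cases "\<forall>j<N. \<phi> j = 0")
  case True
  then have "poly_of_vec N \<phi> = 0"
    by (simp add: poly_of_vec_eq_0_iff)
  then have "poly_of_vec N \<psi> * rev_cnj_poly N \<psi> = 0"
    using A by (simp add: autocorrelation_poly_def)
  then have "\<forall>j<N. \<psi> j = 0"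
    by (auto simp: poly_of_vec_eq_0_iff rev_cnj_poly_eq_0_iff)
  with True show ?thesis
    by (intro exI[of _ 1]) simp
next
  case False
  then have "poly_of_vec N \<phi> \<noteq> 0" "rev_cnj_poly N \<phi> \<noteq> 0"
    by (auto simp: poly_of_vec_eq_0_iff rev_cnj_poly_eq_0_iff)
  moreover from this have "poly_of_vec N \<psi> \<noteq> 0"
    using A by (auto simp: autocorrelation_poly_def)
  ultimately have nonzero: "poly_of_vec N \<phi> \<noteq> 0" "rev_cnj_poly N \<phi> \<noteq> 0" "poly_of_vec N \<psi> \<noteq> 0"
    by blast+
  have "\<exists>l. \<forall>j<N. \<psi> j = l * \<phi> j"
    using correlation_identities_cases[OF A S]
  proof
    assume X: "poly_of_vec N \<phi> * (poly_of_vec N \<psi> \<circ>\<^sub>p [:0, w:])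
      = (poly_of_vec N \<phi> \<circ>\<^sub>p [:0, w:]) * poly_of_vec N \<psi>"
    have "N \<ge> 1"
      using False by auto
    then have "degree (poly_of_vec N f) < N" for f :: "nat \<Rightarrow> complex"
      using degree_poly_of_vec_le[of N f] by linarith
    moreover have "inj_on (\<lambda>i. w ^ i) {..<N}"
      using w by (auto simp: inj_on_def)
    ultimately obtain l where "poly_of_vec N \<psi> = smult l (poly_of_vec N \<phi>)"
      using dilation_identity_proportional[OF X nonzero(1)] by blast
    then show ?thesis
      by (auto simp: poly_of_vec_eq_smult_iff)
  next
    assume Y: "rev_cnj_poly N \<phi> * (poly_of_vec N \<psi> \<circ>\<^sub>p [:0, w:])
      = smult (w ^ N) ((rev_cnj_poly N \<phi> \<circ>\<^sub>p [:0, w:]) * poly_of_vec N \<psi>)"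
    have tail: "\<phi> j = 0 \<and> \<psi> j = 0" if "0 < j" "j < N" for j
      using twisted_dilation_identity_constant[OF Y w \<open>w \<noteq> 0\<close> nonzero(2,3) that] .
    obtain j where "j < N" "\<phi> j \<noteq> 0"
      using False by blast
    then have "\<phi> 0 \<noteq> 0"
      using tail by (cases "j = 0") auto
    have "\<psi> j = \<psi> 0 / \<phi> 0 * \<phi> j" if "j < N" for j
      using tail[of j] that \<open>\<phi> 0 \<noteq> 0\<close> by (cases "j = 0") auto
    then show ?thesis
      by blast
  qed
  then obtain l where "\<forall>j<N. \<psi> j = l * \<phi> j" ..
  moreover have "cmod l = 1"
    using unimodular_if_same_energy[OF A calculation] False by blast
  ultimately show ?thesis
    by blast
qed

lemma autocorrelation_poly_eqI:
  fixes \<phi> \<psi> :: "nat \<Rightarrow> complex"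
  assumes "inj_on (\<lambda>k. w ^ k) {..<M}" and "cmod w = 1" and "2 * N - 2 < M"
    and "\<And>k. cmod (poly (poly_of_vec N \<phi>) (w ^ k)) = cmod (poly (poly_of_vec N \<psi>) (w ^ k))"
  shows "autocorrelation_poly N \<phi> = autocorrelation_poly N \<psi>"
  using assms le_less_trans[OF degree_autocorrelation_poly_le assms(3)]
  by (intro poly_eq_on_powers[OF _ _ assms(1)]) (auto simp: poly_autocorrelation_poly_unit norm_power)

lemma shifted_correlation_poly_eqI:
  fixes \<phi> \<psi> :: "nat \<Rightarrow> complex"
  assumes "inj_on (\<lambda>k. w ^ k) {..<M}" and "cmod w = 1" and "w ^ (2 * N - 1) = 1" and "2 * N - 2 < M"
    and modulus: "\<And>k. cmod (poly (poly_of_vec N \<phi>) (w ^ k)) = cmod (poly (poly_of_vec N \<psi>) (w ^ k))"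
    and "\<And>k. k < M \<Longrightarrow>
      cmod (poly (poly_of_vec N \<phi>) (w ^ (k + 1)) - poly (poly_of_vec N \<phi>) (w ^ k))
      = cmod (poly (poly_of_vec N \<psi>) (w ^ (k + 1)) - poly (poly_of_vec N \<psi>) (w ^ k))"
  shows "shifted_correlation_poly N w \<phi> = shifted_correlation_poly N w \<psi>"
  using assms modulus[of "Suc k" for k] le_less_trans[OF degree_shifted_correlation_poly_le assms(4)]
  by (intro poly_eq_on_powers[OF _ _ assms(1)]) (auto simp: poly_shifted_correlation_poly_unit norm_power)

lemma root_of_unity_power_eq_iff:
  fixes M :: nat
  assumes "M \<ge> 1"
  shows "exp (2 * pi * \<i> / M) ^ i = exp (2 * pi * \<i> / M) ^ j \<longleftrightarrow> i mod M = j mod M"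
proof -
  have "exp (2 * pi * \<i> / M) ^ k = exp (2 * of_real pi * \<i> * of_nat k / of_nat M)" for k
    by (simp flip: exp_of_nat_mult add: algebra_simps)
  then show ?thesis
    using complex_root_unity_eq[OF assms] by simp
qed

theorem mainTheorem13:
  fixes N :: nat and \<phi> \<psi> :: "nat \<Rightarrow> complex"
  assumes "N \<ge> 1"
    and "\<forall>k \<le> 2*N - 2. cmod (trig_poly N \<phi> (real k / real (2*N - 1)))
                        = cmod (trig_poly N \<psi> (real k / real (2*N - 1)))"
    and "\<forall>k \<le> 2*N - 2.
           cmod (trig_poly N \<phi> (real (k+1) / real (2*N - 1)) - trig_poly N \<phi> (real k / real (2*N - 1)))
         = cmod (trig_poly N \<psi> (real (k+1) / real (2*N - 1)) - trig_poly N \<psi> (real k / real (2*N - 1)))"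
  shows "\<exists>c::complex. cmod c = 1 \<and> (\<forall>j<N. \<psi> j = c * \<phi> j)"
proof -
  define M where "M = 2 * N - 1"
  define w where "w = exp (2 * pi * \<i> / M)"
  have M: "M \<ge> 1" "2 * N - 2 < M"
    using assms(1) by (auto simp: M_def)
  have w_eq: "\<And>i j. w ^ i = w ^ j \<longleftrightarrow> i mod M = j mod M"
    unfolding w_def using M(1) by (rule root_of_unity_power_eq_iff)
  have w: "cmod w = 1" "w \<noteq> 0" "w ^ M = 1"
    using w_eq[of M 0] by (auto simp: w_def)
  have inj: "inj_on (\<lambda>k. w ^ k) {..<M}"
    using w_eq by (auto simp: inj_on_def)
  have sample: "trig_poly N f (real k / real M) = poly (poly_of_vec N f) (w ^ k)" for f k
    unfolding w_def by (rule trig_poly_at_root_of_unity)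
  note hyps = assms(2,3)[folded M_def]
  have modulus: "cmod (poly (poly_of_vec N \<phi>) (w ^ k)) = cmod (poly (poly_of_vec N \<psi>) (w ^ k))" for k
  proof -
    have "w ^ k = w ^ (k mod M)"
      using w_eq by simp
    moreover have "k mod M < M"
      using M(1) by simp
    then have "k mod M \<le> 2 * N - 2"
      unfolding M_def by linarith
    ultimately show ?thesis
      using hyps(1)[rule_format, of "k mod M"] by (simp only: sample)
  qed
  have increment: "cmod (poly (poly_of_vec N \<phi>) (w ^ (k + 1)) - poly (poly_of_vec N \<phi>) (w ^ k))
      = cmod (poly (poly_of_vec N \<psi>) (w ^ (k + 1)) - poly (poly_of_vec N \<psi>) (w ^ k))"
    if "k < M" for k
  proof -
    have "k \<le> 2 * N - 2"
      using that unfolding M_def by linarith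
    then show ?thesis
      using hyps(2) by (simp only: sample)
  qed
  show ?thesis
    by (rule phase_retrieval_from_correlations[OF
          autocorrelation_poly_eqI[OF inj w(1) M(2) modulus]
          shifted_correlation_poly_eqI[OF inj w(1) w(3)[unfolded M_def] M(2) modulus increment]
          w_eq[unfolded M_def] w(2)])
qed

end
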